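(* In the Byblos protocol described in the context, if a transaction is assigned timestamp $t$, then for every integer $t'$ with $0<t'<t$, some transaction is assigned timestamp $t'$.
   Context: Byblos timestamping. There are $n=4f+1$ servers, at most $f$ of which are Byzantine; the rest are correct. Clients are not Byzantine (they may crash). Messages between correct parties are eventually delivered, channels are FIFO, senders are authenticated, and client messages are signed and unforgeable. Each correct server keeps an integer $\mathit{clock}$, initially $0$. Client with transaction $T$: broadcasts $\mathrm{Propose}(T)$ to all servers; waits for $\mathrm{ProposeAck}(T,\cdot)$ responses from at least $n-f$ servers; letting $\mathit{timestamp}[s]$ be the value received from server $s$ ($0$ if none), sets $\hat t$ to $1$ plus the $(f+1)$-st largest value of $\mathit{timestamp}[\cdot]$; then broadcasts $\mathrm{Confirm}(T,\hat t)$. Correct server: on $\mathrm{Propose}(T)$ from a client, replies $\mathrm{ProposeAck}(T,\mathit{clock})$ with its current clock (and forwards the proposal with that clock value to the other servers); on receiving $\mathrm{Confirm}(T,\hat t)$ from a client or forwarded by a server, sets $\mathit{clock}:=\max(\mathit{clock},\hat t)$ and forwards $\mathrm{Confirm}(T,\hat t)$ to all servers if not previously done. The clock changes only in this way. A transaction $T$ is \emph{assigned timestamp} $t$ if some correct server received a $\mathrm{Confirm}(T,t)$ message from a client. *)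

theory Defs
  imports Main
begin

text \<open>Operational model of the Byblos timestamping protocol.
  Servers are the naturals 0..n-1; Byz is the set of Byzantine servers.
  Clients have an arbitrary type 'c, transactions an arbitrary type 'tx.\<close>

datatype 'c node = Srv nat | Cli 'c

datatype 'tx msg =
    Propose 'tx
  | ProposeAck 'tx int
  | FwdPropose 'tx int   \<comment> \<open>proposal forwarded by a server with its clock value\<close>
  | Confirm 'tx int

datatype cphase = Idle | Waiting "nat \<Rightarrow> int option" | Confirmed

record ('c, 'tx) config =
  clk     :: "nat \<Rightarrow> int"
  fwd     :: "nat \<Rightarrow> ('tx \<times> int) set"            \<comment> \<open>Confirms already forwarded\<close>
  cst     :: "'c \<Rightarrow> 'tx \<Rightarrow> cphase"
  crashed :: "'c set"
  chan    :: "('c node \<times> 'c node) \<Rightarrow> 'tx msg list"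
  signed  :: "('tx \<times> int) set"                  \<comment> \<open>Confirm messages ever signed by clients\<close>

datatype ('c, 'tx) event =
    EvPropose 'c 'tx
  | EvConfirm 'c 'tx
  | EvDeliver "'c node" "'c node" "'tx msg"   \<comment> \<open>sender, receiver, message\<close>
  | EvCrash 'c
  | EvByz nat "'c node" "'tx msg"
  | EvSkip

definition init_config :: "('c, 'tx) config" where
  "init_config = \<lparr>clk = (\<lambda>_. 0), fwd = (\<lambda>_. {}), cst = (\<lambda>_ _. Idle), crashed = {},
                  chan = (\<lambda>_. []), signed = {}\<rparr>"

definition send :: "'c node \<Rightarrow> 'c node \<Rightarrow> 'tx msg \<Rightarrow> ('c, 'tx) config \<Rightarrow> ('c, 'tx) config" where
  "send p q m \<sigma> = \<sigma>\<lparr>chan := (chan \<sigma>)((p, q) := chan \<sigma> (p, q) @ [m])\<rparr>"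

definition bcast :: "'c node \<Rightarrow> nat set \<Rightarrow> 'tx msg \<Rightarrow> ('c, 'tx) config \<Rightarrow> ('c, 'tx) config" where
  "bcast p S m \<sigma> = \<sigma>\<lparr>chan := (\<lambda>ch. if fst ch = p \<and> snd ch \<in> Srv ` S then chan \<sigma> ch @ [m]
                                       else chan \<sigma> ch)\<rparr>"

definition srv_handle :: "nat \<Rightarrow> nat \<Rightarrow> 'c node \<Rightarrow> 'tx msg \<Rightarrow> ('c, 'tx) config \<Rightarrow> ('c, 'tx) config" where
  "srv_handle n s p m \<sigma> =
    (case m of
       Propose T \<Rightarrow>
         (case p of
            Cli c \<Rightarrow> bcast (Srv s) ({..<n} - {s}) (FwdPropose T (clk \<sigma> s))
                       (send (Srv s) (Cli c) (ProposeAck T (clk \<sigma> s)) \<sigma>)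
          | Srv _ \<Rightarrow> \<sigma>)
     | Confirm T t \<Rightarrow>
         (let \<sigma>' = \<sigma>\<lparr>clk := (clk \<sigma>)(s := max (clk \<sigma> s) t)\<rparr> in
          if (T, t) \<in> fwd \<sigma> s then \<sigma>'
          else bcast (Srv s) ({..<n} - {s}) (Confirm T t)
                 (\<sigma>'\<lparr>fwd := (fwd \<sigma>)(s := insert (T, t) (fwd \<sigma> s))\<rparr>))
     | _ \<Rightarrow> \<sigma>)"

definition cli_handle :: "nat \<Rightarrow> 'c \<Rightarrow> 'c node \<Rightarrow> 'tx msg \<Rightarrow> ('c, 'tx) config \<Rightarrow> ('c, 'tx) config" where
  "cli_handle n c p m \<sigma> =
    (if c \<in> crashed \<sigma> then \<sigma> else
     (case (p, m) of
        (Srv s, ProposeAck T v) \<Rightarrow>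
          (case cst \<sigma> c T of
             Waiting ts \<Rightarrow>
               (if s < n \<and> ts s = None
                then \<sigma>\<lparr>cst := (cst \<sigma>)(c := (cst \<sigma> c)(T := Waiting (ts(s := Some v))))\<rparr>
                else \<sigma>)
           | _ \<Rightarrow> \<sigma>)
      | _ \<Rightarrow> \<sigma>))"

definition deliver :: "nat \<Rightarrow> nat set \<Rightarrow> 'c node \<Rightarrow> 'c node \<Rightarrow> 'tx msg \<Rightarrow> ('c, 'tx) config \<Rightarrow> ('c, 'tx) config" where
  "deliver n Byz p q m \<sigma> =
    (let \<sigma>0 = \<sigma>\<lparr>chan := (chan \<sigma>)((p, q) := tl (chan \<sigma> (p, q)))\<rparr> in
     case q of
       Srv s \<Rightarrow> (if s < n \<and> s \<notin> Byz then srv_handle n s p m \<sigma>0 else \<sigma>0)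
     | Cli c \<Rightarrow> cli_handle n c p m \<sigma>0)"

definition kth_largest :: "nat \<Rightarrow> int list \<Rightarrow> int" where
  "kth_largest k xs = rev (sort xs) ! (k - 1)"

definition client_ts :: "nat \<Rightarrow> nat \<Rightarrow> (nat \<Rightarrow> int option) \<Rightarrow> int" where
  "client_ts n f ts =
     1 + kth_largest (f + 1) (map (\<lambda>s. case ts s of None \<Rightarrow> 0 | Some v \<Rightarrow> v) [0..<n])"

definition step :: "nat \<Rightarrow> nat \<Rightarrow> nat set \<Rightarrow> ('c, 'tx) config \<Rightarrow> ('c, 'tx) event \<Rightarrow> ('c, 'tx) config \<Rightarrow> bool" where
  "step n f Byz \<sigma> ev \<sigma>' =
    (case ev of
       EvPropose c T \<Rightarrow>
         c \<notin> crashed \<sigma> \<and> cst \<sigma> c T = Idle \<and>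
         \<sigma>' = bcast (Cli c) {..<n} (Propose T)
                (\<sigma>\<lparr>cst := (cst \<sigma>)(c := (cst \<sigma> c)(T := Waiting (\<lambda>_. None)))\<rparr>)
     | EvConfirm c T \<Rightarrow>
         c \<notin> crashed \<sigma> \<and>
         (\<exists>ts. cst \<sigma> c T = Waiting ts \<and> n - f \<le> card {s. s < n \<and> ts s \<noteq> None} \<and>
               \<sigma>' = bcast (Cli c) {..<n} (Confirm T (client_ts n f ts))
                      (\<sigma>\<lparr>cst := (cst \<sigma>)(c := (cst \<sigma> c)(T := Confirmed)),
                         signed := insert (T, client_ts n f ts) (signed \<sigma>)\<rparr>))
     | EvDeliver p q m \<Rightarrow>
         (\<exists>rest. chan \<sigma> (p, q) = m # rest) \<and> \<sigma>' = deliver n Byz p q m \<sigma>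
     | EvCrash c \<Rightarrow> \<sigma>' = \<sigma>\<lparr>crashed := insert c (crashed \<sigma>)\<rparr>
     | EvByz s q m \<Rightarrow>
         s \<in> Byz \<and> (\<forall>T t. m = Confirm T t \<longrightarrow> (T, t) \<in> signed \<sigma>) \<and>
         \<sigma>' = send (Srv s) q m \<sigma>
     | EvSkip \<Rightarrow> \<sigma>' = \<sigma>)"

definition correct :: "nat \<Rightarrow> nat set \<Rightarrow> (nat \<Rightarrow> ('c, 'tx) config) \<Rightarrow> 'c node \<Rightarrow> bool" where
  "correct n Byz ex p =
    (case p of Srv s \<Rightarrow> s < n \<and> s \<notin> Byz | Cli c \<Rightarrow> (\<forall>j. c \<notin> crashed (ex j)))"

text \<open>Infinite fair run. Channels are reliable: messages sent by any client (even one that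
  later crashes) or by a correct server to a correct party are eventually delivered.\<close>
definition run :: "nat \<Rightarrow> nat \<Rightarrow> nat set \<Rightarrow> (nat \<Rightarrow> ('c, 'tx) config) \<Rightarrow> (nat \<Rightarrow> ('c, 'tx) event) \<Rightarrow> bool" where
  "run n f Byz ex lab =
    (ex 0 = init_config \<and>
     (\<forall>i. step n f Byz (ex i) (lab i) (ex (Suc i))) \<and>
     (\<forall>i p q. (correct n Byz ex p \<or> (\<exists>c. p = Cli c)) \<and> correct n Byz ex q \<and>
              chan (ex i) (p, q) \<noteq> [] \<longrightarrow> (\<exists>j\<ge>i. \<exists>m. lab j = EvDeliver p q m)))"

definition assigned :: "nat \<Rightarrow> nat set \<Rightarrow> (nat \<Rightarrow> ('c, 'tx) event) \<Rightarrow> 'tx \<Rightarrow> int \<Rightarrow> bool" where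
  "assigned n Byz lab T t =
    (\<exists>i c s. s < n \<and> s \<notin> Byz \<and> lab i = EvDeliver (Cli c) (Srv s) (Confirm T t))"

end

theory Submission
  imports Defs "HOL-Library.Sublist"
begin

text \<open>Call a timestamp signed once some client has produced a Confirm message carrying it.
  The signed timestamps have no gaps: a client confirms with 1 plus the (f+1)-st largest clock
  value it received, and as at most f servers are Byzantine, a correct server reported a value at
  least that large. Correct servers only ever hold and report 0 or signed timestamps, so that value
  is signed, and then so is every positive value below the new timestamp. Hence if Confirm(T,t)
  reaches a correct server, (T,t) is signed and so is some (T',t') for each 0 < t' < t; the client
  that signed it broadcast Confirm(T',t') to all servers, and fairness delivers it.\<close>

lemma kth_largest_le_card:
  assumes "0 < k" "k \<le> length xs"
  shows "k \<le> card {i. i < length xs \<and> kth_largest k xs \<le> xs ! i}"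
proof -
  define ys where "ys = rev (sort xs)"
  define v where "v = kth_largest k xs"
  have "v \<le> x" if x: "x \<in> set (take k ys)" for x
  proof -
    obtain j where j: "j < k" "x = ys ! j"
      using x by (auto simp: in_set_conv_nth)
    have "sorted (rev ys)" by (simp add: ys_def)
    then show ?thesis
      using sorted_rev_nth_mono[of ys j "k - 1"] j assms by (simp add: v_def ys_def kth_largest_def)
  qed
  then have "k = length (filter (\<lambda>x. v \<le> x) (take k ys))"
    using assms by (simp add: ys_def)
  also have "\<dots> \<le> length (filter (\<lambda>x. v \<le> x) ys)"
    by (metis append_take_drop_id filter_append length_append le_add1)
  also have "\<dots> = length (filter (\<lambda>x. v \<le> x) xs)"
    by (simp add: ys_def rev_filter[symmetric] filter_sort)
  also have "\<dots> = card {i. i < length xs \<and> v \<le> xs ! i}"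
    by (rule length_filter_conv_card)
  finally show ?thesis by (simp add: v_def)
qed

lemma kth_largest_honest_witness:
  assumes "f < n" "finite Byz" "card Byz \<le> f"
  obtains s where "s < n" "s \<notin> Byz" "kth_largest (f + 1) (map g [0..<n]) \<le> g s"
proof -
  define A where "A = {s. s < n \<and> kth_largest (f + 1) (map g [0..<n]) \<le> g s}"
  have "{i. i < length (map g [0..<n]) \<and> kth_largest (f + 1) (map g [0..<n]) \<le> map g [0..<n] ! i} = A"
    by (auto simp: A_def)
  then have "f + 1 \<le> card A"
    using kth_largest_le_card[of "f + 1" "map g [0..<n]"] assms(1) by simp
  then have "\<not> A \<subseteq> Byz"
    using assms(2,3) card_mono[of Byz A] by linarith
  then show ?thesis
    using that by (auto simp: A_def)
qed

lemma bcast_simps [simp]: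
  "clk (bcast p S m \<sigma>) = clk \<sigma>" "fwd (bcast p S m \<sigma>) = fwd \<sigma>" "cst (bcast p S m \<sigma>) = cst \<sigma>"
  "crashed (bcast p S m \<sigma>) = crashed \<sigma>" "signed (bcast p S m \<sigma>) = signed \<sigma>"
  by (simp_all add: bcast_def)

lemma send_simps [simp]:
  "clk (send p q m \<sigma>) = clk \<sigma>" "fwd (send p q m \<sigma>) = fwd \<sigma>" "cst (send p q m \<sigma>) = cst \<sigma>"
  "crashed (send p q m \<sigma>) = crashed \<sigma>" "signed (send p q m \<sigma>) = signed \<sigma>"
  by (simp_all add: send_def)

lemma in_set_chan_bcast [simp]:
  "m' \<in> set (chan (bcast p S m \<sigma>) (p', q)) \<longleftrightarrow>
    m' \<in> set (chan \<sigma> (p', q)) \<or> (p' = p \<and> q \<in> Srv ` S \<and> m' = m)"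
  by (auto simp: bcast_def)

lemma in_set_chan_send [simp]:
  "m' \<in> set (chan (send p q m \<sigma>) ch) \<longleftrightarrow> m' \<in> set (chan \<sigma> ch) \<or> (ch = (p, q) \<and> m' = m)"
  by (auto simp: send_def)

definition pop :: "'c node \<times> 'c node \<Rightarrow> ('c, 'tx) config \<Rightarrow> ('c, 'tx) config" where
  "pop ch \<sigma> = \<sigma>\<lparr>chan := (chan \<sigma>)(ch := tl (chan \<sigma> ch))\<rparr>"

lemma pop_simps [simp]:
  "clk (pop ch \<sigma>) = clk \<sigma>" "fwd (pop ch \<sigma>) = fwd \<sigma>" "cst (pop ch \<sigma>) = cst \<sigma>"
  "crashed (pop ch \<sigma>) = crashed \<sigma>" "signed (pop ch \<sigma>) = signed \<sigma>"
  by (simp_all add: pop_def)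

lemma chan_pop: "chan (pop ch \<sigma>) = (chan \<sigma>)(ch := tl (chan \<sigma> ch))"
  by (simp add: pop_def)

lemma set_chan_pop: "set (chan (pop ch \<sigma>) ch') \<subseteq> set (chan \<sigma> ch')"
  by (simp add: chan_pop set_mono_suffix)

lemma deliver_pop:
  "deliver n Byz p q m \<sigma> =
    (case q of
       Srv s \<Rightarrow> if s < n \<and> s \<notin> Byz then srv_handle n s p m (pop (p, q) \<sigma>) else pop (p, q) \<sigma>
     | Cli c \<Rightarrow> cli_handle n c p m (pop (p, q) \<sigma>))"
  unfolding deliver_def pop_def Let_def ..

lemma prefix_chan_srv_handle: "prefix (chan \<sigma> ch) (chan (srv_handle n s p m \<sigma>) ch)"
  by (auto simp: srv_handle_def Let_def send_def bcast_def split: msg.split node.split)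

lemma chan_cli_handle [simp]: "chan (cli_handle n c p m \<sigma>) = chan \<sigma>"
  by (auto simp: cli_handle_def split: node.split msg.split cphase.split)

lemma prefix_chan_deliver: "prefix (chan (pop (p, q) \<sigma>) ch) (chan (deliver n Byz p q m \<sigma>) ch)"
  by (auto simp: deliver_pop prefix_chan_srv_handle split: node.split)

lemma step_prefix_chan:
  assumes "step n f Byz \<sigma> ev \<sigma>'" "\<forall>m. ev \<noteq> EvDeliver p q m"
  shows "prefix (chan \<sigma> (p, q)) (chan \<sigma>' (p, q))"
proof (cases ev)
  case (EvDeliver p' q' m)
  with assms have "\<sigma>' = deliver n Byz p' q' m \<sigma>" "(p', q') \<noteq> (p, q)"
    by (auto simp: step_def)
  moreover from \<open>(p', q') \<noteq> (p, q)\<close> have "chan (pop (p', q') \<sigma>) (p, q) = chan \<sigma> (p, q)"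
    by (auto simp: chan_pop)
  ultimately show ?thesis
    using prefix_chan_deliver[of p' q' \<sigma> "(p, q)"] by simp
qed (use assms in \<open>auto simp: step_def send_def bcast_def\<close>)

lemma step_deliver_chan:
  assumes "step n f Byz \<sigma> (EvDeliver p q m) \<sigma>'"
  obtains rest where "chan \<sigma> (p, q) = m # rest" "prefix rest (chan \<sigma>' (p, q))"
  using assms prefix_chan_deliver[of p q \<sigma> "(p, q)"] by (auto simp: step_def chan_pop)

definition admissible :: "('tx \<times> int) set \<Rightarrow> int \<Rightarrow> bool" where
  "admissible S v \<longleftrightarrow> v = 0 \<or> v \<in> snd ` S"

lemma admissible_0 [simp]: "admissible S 0"
  by (simp add: admissible_def)

lemma admissible_mono: "S \<subseteq> S' \<Longrightarrow> admissible S v \<Longrightarrow> admissible S' v"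
  by (auto simp: admissible_def)

fun sound_msg :: "nat \<Rightarrow> nat set \<Rightarrow> ('tx \<times> int) set \<Rightarrow> 'c node \<Rightarrow> 'tx msg \<Rightarrow> bool" where
  "sound_msg n Byz S p (Confirm T t) \<longleftrightarrow> (T, t) \<in> S"
| "sound_msg n Byz S (Srv s) (ProposeAck T v) \<longleftrightarrow> (s < n \<and> s \<notin> Byz \<longrightarrow> admissible S v)"
| "sound_msg n Byz S p m \<longleftrightarrow> True"

lemma sound_msg_mono: "S \<subseteq> S' \<Longrightarrow> sound_msg n Byz S p m \<Longrightarrow> sound_msg n Byz S' p m"
  by (induction n Byz S p m rule: sound_msg.induct) (auto intro: admissible_mono)

lemma sound_msg_byzantine:
  "s \<in> Byz \<Longrightarrow> (\<forall>T t. m = Confirm T t \<longrightarrow> (T, t) \<in> S) \<Longrightarrow> sound_msg n Byz S (Srv s) m"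
  by (cases m) auto

definition byblos_inv :: "nat \<Rightarrow> nat set \<Rightarrow> ('c, 'tx) config \<Rightarrow> bool" where
  "byblos_inv n Byz \<sigma> \<longleftrightarrow>
     (\<forall>t\<in>snd ` signed \<sigma>. {0<..<t} \<subseteq> snd ` signed \<sigma>) \<and>
     (\<forall>s. s < n \<and> s \<notin> Byz \<longrightarrow> admissible (signed \<sigma>) (clk \<sigma> s)) \<and>
     (\<forall>p q. \<forall>m\<in>set (chan \<sigma> (p, q)). sound_msg n Byz (signed \<sigma>) p m) \<and>
     (\<forall>c T ts s v. cst \<sigma> c T = Waiting ts \<and> s < n \<and> s \<notin> Byz \<and> ts s = Some v \<longrightarrow>
        admissible (signed \<sigma>) v)"

lemma byblos_inv_gapless:
  assumes "byblos_inv n Byz \<sigma>" "t \<in> snd ` signed \<sigma>" "0 < t'" "t' < t"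
  shows "t' \<in> snd ` signed \<sigma>"
proof -
  have "{0<..<t} \<subseteq> snd ` signed \<sigma>"
    using assms(1,2) unfolding byblos_inv_def by blast
  with assms(3,4) show ?thesis
    by auto
qed

lemma byblos_inv_sound:
  "byblos_inv n Byz \<sigma> \<Longrightarrow> m \<in> set (chan \<sigma> (p, q)) \<Longrightarrow> sound_msg n Byz (signed \<sigma>) p m"
  by (simp add: byblos_inv_def)

lemma byblos_inv_clk:
  "byblos_inv n Byz \<sigma> \<Longrightarrow> s < n \<Longrightarrow> s \<notin> Byz \<Longrightarrow> admissible (signed \<sigma>) (clk \<sigma> s)"
  by (simp add: byblos_inv_def)

lemma byblos_inv_init: "byblos_inv n Byz init_config"
  by (simp add: byblos_inv_def init_config_def)

lemma byblos_inv_extend: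
  assumes inv: "byblos_inv n Byz \<sigma>"
    and same: "signed \<sigma>' = signed \<sigma>" "cst \<sigma>' = cst \<sigma>"
    and clk: "\<And>s. s < n \<Longrightarrow> s \<notin> Byz \<Longrightarrow> admissible (signed \<sigma>) (clk \<sigma>' s)"
    and chan: "\<And>p q m. m \<in> set (chan \<sigma>' (p, q)) \<Longrightarrow>
                 m \<in> set (chan \<sigma> (p, q)) \<or> sound_msg n Byz (signed \<sigma>) p m"
  shows "byblos_inv n Byz \<sigma>'"
proof -
  have "\<forall>m\<in>set (chan \<sigma>' (p, q)). sound_msg n Byz (signed \<sigma>) p m" for p q
    using inv chan unfolding byblos_inv_def by blast
  with inv clk show ?thesis
    unfolding byblos_inv_def same by simp
qed

lemma byblos_inv_pop: "byblos_inv n Byz \<sigma> \<Longrightarrow> byblos_inv n Byz (pop ch \<sigma>)"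
  by (rule byblos_inv_extend) (auto simp: byblos_inv_def dest: set_chan_pop[THEN subsetD])

lemma byblos_inv_srv_handle:
  assumes inv: "byblos_inv n Byz \<sigma>" and s: "s < n" "s \<notin> Byz"
    and sound: "sound_msg n Byz (signed \<sigma>) p m"
  shows "byblos_inv n Byz (srv_handle n s p m \<sigma>)"
proof (cases m)
  case (Propose T)
  with byblos_inv_clk[OF inv] s show ?thesis
    by (cases p) (auto simp: srv_handle_def inv intro!: byblos_inv_extend[OF inv])
next
  case (Confirm T t)
  then have "admissible (signed \<sigma>) t"
    using sound by (force simp: admissible_def)
  then have "admissible (signed \<sigma>) (max (clk \<sigma> s') t)" if "s' < n" "s' \<notin> Byz" for s'
    using byblos_inv_clk[OF inv that] by (simp add: max_def)
  with Confirm sound byblos_inv_clk[OF inv] show ?thesis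
    by (auto simp: srv_handle_def Let_def intro!: byblos_inv_extend[OF inv])
qed (use inv in \<open>simp_all add: srv_handle_def\<close>)

lemma byblos_inv_cli_handle:
  assumes "byblos_inv n Byz \<sigma>" "sound_msg n Byz (signed \<sigma>) p m"
  shows "byblos_inv n Byz (cli_handle n c p m \<sigma>)"
  using assms unfolding byblos_inv_def
  by (auto simp: cli_handle_def split: msg.split node.split cphase.split)

lemma byblos_inv_deliver:
  assumes inv: "byblos_inv n Byz \<sigma>" and queued: "m \<in> set (chan \<sigma> (p, q))"
  shows "byblos_inv n Byz (deliver n Byz p q m \<sigma>)"
proof -
  have "sound_msg n Byz (signed (pop (p, q) \<sigma>)) p m"
    using byblos_inv_sound[OF inv queued] by simp
  with byblos_inv_pop[OF inv] show ?thesis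
    by (auto simp: deliver_pop intro: byblos_inv_srv_handle byblos_inv_cli_handle split: node.split)
qed

lemma below_client_ts_signed:
  assumes inv: "byblos_inv n Byz \<sigma>" and waiting: "cst \<sigma> c T = Waiting ts"
    and byz: "f < n" "finite Byz" "card Byz \<le> f"
    and t': "0 < t'" "t' < client_ts n f ts"
  shows "t' \<in> snd ` signed \<sigma>"
proof -
  define g where "g = (\<lambda>s. case ts s of None \<Rightarrow> 0 | Some v \<Rightarrow> v)"
  obtain s where s: "s < n" "s \<notin> Byz" and "kth_largest (f + 1) (map g [0..<n]) \<le> g s"
    by (rule kth_largest_honest_witness[OF byz])
  moreover have "client_ts n f ts = 1 + kth_largest (f + 1) (map g [0..<n])"
    by (simp add: client_ts_def g_def)
  ultimately have "t' \<le> g s"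
    using t'(2) by simp
  then obtain v where v: "ts s = Some v" "t' \<le> v"
    using t'(1) by (cases "ts s") (auto simp: g_def)
  have "admissible (signed \<sigma>) v"
    using inv waiting s v(1) unfolding byblos_inv_def by blast
  with v(2) t'(1) have v_signed: "v \<in> snd ` signed \<sigma>"
    by (auto simp: admissible_def)
  show ?thesis
    using byblos_inv_gapless[OF inv v_signed t'(1)] v_signed v(2) by (cases "t' = v") simp_all
qed

lemma byblos_inv_confirm:
  assumes inv: "byblos_inv n Byz \<sigma>" and waiting: "cst \<sigma> c T = Waiting ts"
    and byz: "f < n" "finite Byz" "card Byz \<le> f"
  defines "t \<equiv> client_ts n f ts"
  shows "byblos_inv n Byz (bcast (Cli c) {..<n} (Confirm T t)
           (\<sigma>\<lparr>cst := (cst \<sigma>)(c := (cst \<sigma> c)(T := Confirmed)),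
              signed := insert (T, t) (signed \<sigma>)\<rparr>))"
proof -
  have gap: "{0<..<t} \<subseteq> snd ` signed \<sigma>"
    using below_client_ts_signed[OF inv waiting byz] by (auto simp: t_def)
  have mono: "signed \<sigma> \<subseteq> insert (T, t) (signed \<sigma>)" by blast
  have "\<forall>m\<in>set (chan \<sigma> (p, q)). sound_msg n Byz (insert (T, t) (signed \<sigma>)) p m" for p q
    using inv sound_msg_mono[OF mono] unfolding byblos_inv_def by blast
  with inv gap admissible_mono[OF mono] show ?thesis
    unfolding byblos_inv_def by (auto simp: image_iff)
qed

lemma byblos_inv_step:
  assumes inv: "byblos_inv n Byz \<sigma>" and step: "step n f Byz \<sigma> ev \<sigma>'"
    and byz: "f < n" "finite Byz" "card Byz \<le> f"
  shows "byblos_inv n Byz \<sigma>'"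
proof (cases ev)
  case (EvPropose c T)
  with step inv show ?thesis
    by (auto simp: step_def byblos_inv_def)
next
  case (EvConfirm c T)
  with step obtain ts where "cst \<sigma> c T = Waiting ts"
    and "\<sigma>' = bcast (Cli c) {..<n} (Confirm T (client_ts n f ts))
                 (\<sigma>\<lparr>cst := (cst \<sigma>)(c := (cst \<sigma> c)(T := Confirmed)),
                    signed := insert (T, client_ts n f ts) (signed \<sigma>)\<rparr>)"
    by (auto simp: step_def)
  with byblos_inv_confirm[OF inv _ byz] show ?thesis
    by simp
next
  case (EvDeliver p q m)
  with step byblos_inv_deliver[OF inv] show ?thesis
    by (auto simp: step_def)
next
  case (EvCrash c)
  with step inv show ?thesis
    by (simp add: step_def byblos_inv_def)
next
  case (EvByz s q m)
  with step byblos_inv_clk[OF inv] show ?thesis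
    by (auto simp: step_def sound_msg_byzantine intro!: byblos_inv_extend[OF inv])
qed (use step inv in \<open>simp add: step_def\<close>)

lemma byblos_inv_delivered_confirm:
  assumes "byblos_inv n Byz \<sigma>" "step n f Byz \<sigma> (EvDeliver p q (Confirm T t)) \<sigma>'"
  shows "(T, t) \<in> signed \<sigma>"
proof -
  obtain rest where "chan \<sigma> (p, q) = Confirm T t # rest"
    using step_deliver_chan[OF assms(2)] .
  then show ?thesis
    using byblos_inv_sound[OF assms(1), of "Confirm T t" p q] by simp
qed

lemma signed_deliver [simp]: "signed (deliver n Byz p q m \<sigma>) = signed \<sigma>"
  by (auto simp: deliver_pop srv_handle_def cli_handle_def Let_def
      split: node.split msg.split cphase.split)

lemma step_signed:
  assumes "step n f Byz \<sigma> ev \<sigma>'" "(T, t) \<in> signed \<sigma>'" "s < n"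
  shows "(T, t) \<in> signed \<sigma> \<or> (\<exists>c. Confirm T t \<in> set (chan \<sigma>' (Cli c, Srv s)))"
  using assms by (auto simp: step_def split: event.splits)

context
  fixes n f Byz and ex :: "nat \<Rightarrow> ('c, 'tx) config" and lab
  assumes run: "run n f Byz ex lab"
begin

lemma run_step: "step n f Byz (ex i) (lab i) (ex (Suc i))"
  using run by (simp add: run_def)

lemma run_fair:
  assumes "correct n Byz ex p \<or> (\<exists>c. p = Cli c)" "correct n Byz ex q" "chan (ex i) (p, q) \<noteq> []"
  shows "\<exists>j\<ge>i. \<exists>m. lab j = EvDeliver p q m"
  using run assms unfolding run_def by (elim conjE allE impE) auto

lemma run_prefix_chan:
  assumes "i \<le> k" "\<forall>j. i \<le> j \<and> j < k \<longrightarrow> (\<forall>m. lab j \<noteq> EvDeliver p q m)"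
  shows "prefix (chan (ex i) (p, q)) (chan (ex k) (p, q))"
  using assms
proof (induction k rule: dec_induct)
  case (step k)
  then show ?case
    using step_prefix_chan[OF run_step, of k p q] prefix_order.trans by auto
qed simp

text \<open>Fairness only promises some delivery on the channel; as channels are FIFO and only grow
  between deliveries, the first one delivers the current head.\<close>

lemma run_delivers_head:
  assumes fair: "correct n Byz ex p \<or> (\<exists>c. p = Cli c)" "correct n Byz ex q"
    and queue: "chan (ex i) (p, q) = m # rest"
  obtains j where "i \<le> j" "lab j = EvDeliver p q m" "prefix rest (chan (ex (Suc j)) (p, q))"
proof -
  define delivers where "delivers k \<longleftrightarrow> i \<le> k \<and> (\<exists>m. lab k = EvDeliver p q m)" for k
  have "\<exists>j. delivers j"
    using run_fair[OF fair] queue by (simp add: delivers_def)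
  then obtain j where "delivers j" and first: "\<forall>k<j. \<not> delivers k"
    using exists_least_iff[THEN iffD1] by blast
  then obtain m' where j: "i \<le> j" and m': "lab j = EvDeliver p q m'"
    by (auto simp: delivers_def)
  have "\<forall>k. i \<le> k \<and> k < j \<longrightarrow> (\<forall>m. lab k \<noteq> EvDeliver p q m)"
    using first by (auto simp: delivers_def)
  from run_prefix_chan[OF j this] queue
  have "prefix (m # rest) (chan (ex j) (p, q))" by simp
  moreover obtain rest' where "chan (ex j) (p, q) = m' # rest'"
    and rest': "prefix rest' (chan (ex (Suc j)) (p, q))"
    using step_deliver_chan[OF run_step[of j, unfolded m']] by blast
  ultimately have "m' = m" "prefix rest rest'" by simp_all
  with m' rest' show ?thesis
    using that j prefix_order.trans by blast
qed

lemma run_delivers_queued: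
  assumes fair: "correct n Byz ex p \<or> (\<exists>c. p = Cli c)" "correct n Byz ex q"
    and queued: "m \<in> set (chan (ex i) (p, q))"
  shows "\<exists>j\<ge>i. lab j = EvDeliver p q m"
proof -
  obtain xs where "prefix (xs @ [m]) (chan (ex i) (p, q))"
    using queued by (auto simp: in_set_conv_decomp prefix_def)
  then show ?thesis
  proof (induction xs arbitrary: i)
    case Nil
    then obtain rest where "chan (ex i) (p, q) = m # rest"
      by (auto simp: prefix_def)
    then show ?case
      using run_delivers_head[OF fair] by metis
  next
    case (Cons x xs)
    then obtain rest where "chan (ex i) (p, q) = x # rest" "prefix (xs @ [m]) rest"
      by (auto simp: prefix_def)
    then obtain j where "i \<le> j" "prefix (xs @ [m]) (chan (ex (Suc j)) (p, q))"
      using run_delivers_head[OF fair] prefix_order.trans by metis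
    moreover from this(2) obtain j' where "Suc j \<le> j'" "lab j' = EvDeliver p q m"
      using Cons.IH by blast
    ultimately show ?case
      by (intro exI[of _ j']) simp
  qed
qed

lemma run_byblos_inv:
  assumes "f < n" "finite Byz" "card Byz \<le> f"
  shows "byblos_inv n Byz (ex i)"
proof (induction i)
  case 0
  with run show ?case
    by (simp add: run_def byblos_inv_init)
next
  case (Suc i)
  with byblos_inv_step[OF _ run_step assms] show ?case .
qed

lemma run_signed_sent:
  assumes "(T, t) \<in> signed (ex i)" "s < n"
  shows "\<exists>j c. Confirm T t \<in> set (chan (ex j) (Cli c, Srv s))"
  using assms(1)
proof (induction i)
  case 0
  with run show ?case
    by (simp add: run_def init_config_def)
next
  case (Suc i)
  with step_signed[OF run_step _ assms(2)] show ?case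
    by blast
qed

lemma run_signed_assigned:
  assumes "(T, t) \<in> signed (ex i)" "s < n" "s \<notin> Byz"
  shows "assigned n Byz lab T t"
proof -
  obtain j c where "Confirm T t \<in> set (chan (ex j) (Cli c, Srv s))"
    using run_signed_sent[OF assms(1,2)] by blast
  moreover have "correct n Byz ex (Srv s)"
    using assms(2,3) by (simp add: correct_def)
  ultimately obtain k where "lab k = EvDeliver (Cli c) (Srv s) (Confirm T t)"
    using run_delivers_queued by blast
  with assms(2,3) show ?thesis
    unfolding assigned_def by blast
qed

end

theorem lemma2:
  fixes n f :: nat and Byz :: "nat set"
    and ex :: "nat \<Rightarrow> ('c, 'tx) config" and lab :: "nat \<Rightarrow> ('c, 'tx) event"
    and T :: 'tx and t t' :: int
  assumes "n = 4 * f + 1"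
    and "Byz \<subseteq> {..<n}" and "card Byz \<le> f"
    and "run n f Byz ex lab"
    and "assigned n Byz lab T t"
    and "0 < t'" and "t' < t"
  shows "\<exists>T'. assigned n Byz lab T' t'"
proof -
  note run = assms(4)
  obtain i c s where s: "s < n" "s \<notin> Byz"
    and delivered: "lab i = EvDeliver (Cli c) (Srv s) (Confirm T t)"
    using assms(5) unfolding assigned_def by blast
  have inv: "byblos_inv n Byz (ex i)"
    using run_byblos_inv[OF run] assms(1-3) finite_subset[OF assms(2)] by simp
  have "(T, t) \<in> signed (ex i)"
    using byblos_inv_delivered_confirm[OF inv run_step[OF run, of i, unfolded delivered]] .
  then have "t' \<in> snd ` signed (ex i)"
    using byblos_inv_gapless[OF inv _ assms(6,7)] by force
  then obtain T' where "(T', t') \<in> signed (ex i)"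
    by force
  then show ?thesis
    using run_signed_assigned[OF run _ s] by blast
qed

end
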